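(* Let $C$ be a configuration on the unlabelled complete graph $K_n$ whose distinct stack sizes are $s_1<s_2<\dots<s_N$, with $s_j$ occurring $a_j\ge1$ times. If $C$ is a period configuration of Parallel Diffusion, then $s_{j+1}-s_j\le a_j+a_{j+1}-1$ for every $1\le j\le N-1$.
   Context: Parallel Diffusion on a graph $G$: a configuration assigns an integer stack size $|v|$ to each vertex. One firing step replaces every stack size simultaneously by $|v| + \#\{u\in N(v): |u|>|v|\} - \#\{u\in N(v): |u|<|v|\}$. A period configuration is a configuration $D$ such that repeated firing starting from $D$ returns to $D$ after some positive number of steps (equivalently, $D$ lies in the eventually periodic part of the configuration sequence of some initial configuration). On the complete graph $K_n$ with unlabelled vertices, a configuration is a multiset of $n$ integers. *)

theory Defs
  imports Main "HOL-Library.Multiset"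
begin

text \<open>A configuration on the unlabelled complete graph K_n is a multiset of n integers
  (the stack sizes). One step of Parallel Diffusion: every stack of size x simultaneously
  gains one chip for each other vertex with a strictly larger stack and loses one chip for
  each other vertex with a strictly smaller stack. (A vertex never compares strictly with
  itself, so counting over the whole multiset equals counting over the neighbours.)\<close>

definition pd_fire :: "int multiset \<Rightarrow> int multiset" where
  "pd_fire C = image_mset
     (\<lambda>x. x + int (size (filter_mset (\<lambda>u. u > x) C))
            - int (size (filter_mset (\<lambda>u. u < x) C))) C"

definition pd_period_config :: "int multiset \<Rightarrow> bool" where
  "pd_period_config C \<longleftrightarrow> (\<exists>k>0. (pd_fire ^^ k) C = C)"

end

theory Submission
  imports Defs
begin

text \<open>Let \<open>g\<^sub>D(x)\<close> be the size that a stack of size \<open>x\<close> in \<open>D\<close> has after one firing, and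
  \<open>E(D) = \<Sum>\<^sub>x x \<cdot> g\<^sub>D(x)\<close>. Pairing the terms of \<open>E(D) - E(pd_fire D)\<close> shows that this energy never
  increases, and that it stays constant only if \<open>g\<^sub>D\<close> is weakly order-reversing on \<open>D\<close>. On a
  periodic orbit the energy is constant, so every period configuration \<open>C\<close> is \<open>g\<^sub>D(D)\<close> for such
  a \<open>D\<close>. Two consecutive stack sizes \<open>v < w\<close> of \<open>C\<close> then come from consecutive stack sizes
  \<open>M < m\<close> of \<open>D\<close> with \<open>g\<^sub>D(M) = w\<close>, \<open>g\<^sub>D(m) = v\<close>, and as no stack of \<open>D\<close> lies strictly
  between \<open>M\<close> and \<open>m\<close>, one gets \<open>w - v = c\<^sub>M + c\<^sub>m - (m - M) \<le> a\<^sub>v + a\<^sub>w - 1\<close>, where \<open>c\<^sub>x\<close> is the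
  multiplicity of \<open>x\<close> in \<open>D\<close>.\<close>

definition pd_move :: "int multiset \<Rightarrow> int \<Rightarrow> int" where
  "pd_move D x = x + int (size {#u \<in># D. x < u#}) - int (size {#u \<in># D. u < x#})"

definition pd_energy :: "int multiset \<Rightarrow> int" where
  "pd_energy D = (\<Sum>x\<in>#D. x * pd_move D x)"

lemma pd_fire_eq_image_mset: "pd_fire D = image_mset (pd_move D) D"
  unfolding pd_fire_def pd_move_def ..

lemma pd_move_mset: "pd_move (mset xs) x = x + (\<Sum>j<length xs. sgn (xs ! j - x))"
proof -
  have "pd_move (mset xs) x = x + (\<Sum>u\<leftarrow>xs. sgn (u - x))"
    by (induction xs) (auto simp: pd_move_def sgn_if)
  then show ?thesis
    by (simp add: sum_list_sum_nth atLeast0LessThan)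
qed

lemma pd_energy_mset:
  "pd_energy (mset xs) = (\<Sum>i<length xs. xs ! i * pd_move (mset xs) (xs ! i))"
proof -
  have "pd_energy (mset xs) = (\<Sum>x\<leftarrow>xs. x * pd_move (mset xs) x)"
    unfolding pd_energy_def by (simp add: sum_mset_sum_list flip: mset_map)
  then show ?thesis
    by (simp add: sum_list_sum_nth atLeast0LessThan)
qed

lemma energy_difference_identity:
  fixes X Y :: "nat \<Rightarrow> int"
  assumes Y: "\<And>i. Y i = X i + (\<Sum>j<n. sgn (X j - X i))"
  shows "2 * ((\<Sum>i<n. Y i * (Y i + (\<Sum>j<n. sgn (Y j - Y i)))) - (\<Sum>i<n. X i * Y i))
     = (\<Sum>i<n. \<Sum>j<n. (Y i - Y j) * (sgn (X j - X i) + sgn (Y j - Y i)))"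
proof -
  define s where "s i j = sgn (X j - X i) + sgn (Y j - Y i)" for i j
  have s_antisym: "s j i = - s i j" for i j
    unfolding s_def by (simp add: sgn_if)
  have "(\<Sum>i<n. Y i * (Y i + (\<Sum>j<n. sgn (Y j - Y i)))) - (\<Sum>i<n. X i * Y i)
      = (\<Sum>i<n. Y i * ((Y i - X i) + (\<Sum>j<n. sgn (Y j - Y i))))"
    by (simp add: sum_subtractf[symmetric] algebra_simps)
  also have "\<dots> = (\<Sum>i<n. Y i * (\<Sum>j<n. s i j))"
    by (simp add: Y s_def sum.distrib)
  also have "\<dots> = (\<Sum>i<n. \<Sum>j<n. Y i * s i j)"
    by (simp add: sum_distrib_left)
  finally have energy_diff: "(\<Sum>i<n. Y i * (Y i + (\<Sum>j<n. sgn (Y j - Y i)))) - (\<Sum>i<n. X i * Y i)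
      = (\<Sum>i<n. \<Sum>j<n. Y i * s i j)" .
  have "(\<Sum>i<n. \<Sum>j<n. Y i * s i j) = (\<Sum>i<n. \<Sum>j<n. - (Y j * s i j))"
  proof (subst sum.swap, intro sum.cong refl)
    fix i j
    show "Y j * s j i = - (Y j * s i j)"
      using s_antisym[of i j] by simp
  qed
  then have "2 * (\<Sum>i<n. \<Sum>j<n. Y i * s i j)
      = (\<Sum>i<n. \<Sum>j<n. Y i * s i j) + (\<Sum>i<n. \<Sum>j<n. - (Y j * s i j))"
    by simp
  also have "\<dots> = (\<Sum>i<n. \<Sum>j<n. (Y i - Y j) * s i j)"
    by (simp add: sum.distrib[symmetric] algebra_simps)
  finally show ?thesis
    by (simp add: energy_diff s_def)
qed

lemma pd_energy_fire_diff:
  assumes D: "D = mset xs"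
  shows "2 * (pd_energy (pd_fire D) - pd_energy D)
    = (\<Sum>i<length xs. \<Sum>j<length xs. (pd_move D (xs ! i) - pd_move D (xs ! j))
        * (sgn (xs ! j - xs ! i) + sgn (pd_move D (xs ! j) - pd_move D (xs ! i))))"
proof -
  define Y where "Y i = pd_move D (xs ! i)" for i
  have Y: "Y i = xs ! i + (\<Sum>j<length xs. sgn (xs ! j - xs ! i))" for i
    by (simp add: Y_def D pd_move_mset)
  have fire: "pd_fire D = mset (map (pd_move D) xs)"
    by (simp add: pd_fire_eq_image_mset D)
  have "pd_energy (pd_fire D)
      = (\<Sum>i<length xs. Y i * (Y i + (\<Sum>j<length xs. sgn (Y j - Y i))))"
    unfolding fire pd_energy_mset pd_move_mset by (simp add: Y_def)
  moreover have "pd_energy D = (\<Sum>i<length xs. xs ! i * Y i)"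
    unfolding D pd_energy_mset Y_def ..
  ultimately have "2 * (pd_energy (pd_fire D) - pd_energy D)
      = (\<Sum>i<length xs. \<Sum>j<length xs. (Y i - Y j) * (sgn (xs ! j - xs ! i) + sgn (Y j - Y i)))"
    using energy_difference_identity[OF Y] by simp
  then show ?thesis
    by (simp only: Y_def)
qed

lemma sgn_pair_term_nonpos:
  fixes a b c d :: int
  shows "(c - d) * (sgn (b - a) + sgn (d - c)) \<le> 0"
  by (cases "b < a"; cases "b = a"; cases "d < c"; cases "d = c"; simp add: sgn_if)

lemma pd_energy_fire_le: "pd_energy (pd_fire D) \<le> pd_energy D"
proof -
  obtain xs where "D = mset xs"
    by (metis ex_mset)
  moreover have "(\<Sum>i<length xs. \<Sum>j<length xs. (pd_move D (xs ! i) - pd_move D (xs ! j))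
        * (sgn (xs ! j - xs ! i) + sgn (pd_move D (xs ! j) - pd_move D (xs ! i)))) \<le> 0"
    by (intro sum_nonpos sgn_pair_term_nonpos)
  ultimately show ?thesis
    using pd_energy_fire_diff by fastforce
qed

lemma pd_energy_fire_eq_imp_antimono:
  assumes "pd_energy (pd_fire D) = pd_energy D"
  shows "antimono_on (set_mset D) (pd_move D)"
proof (rule monotone_onI, rule ccontr)
  fix a b assume a: "a \<in> set_mset D" and b: "b \<in> set_mset D" and "a \<le> b"
    and "\<not> pd_move D b \<le> pd_move D a"
  then have ab: "pd_move D a < pd_move D b" "a < b"
    by (auto simp: order.strict_iff_order)
  obtain xs where D: "D = mset xs"
    by (metis ex_mset)
  obtain i j where ij: "i < length xs" "j < length xs" "xs ! i = a" "xs ! j = b"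
    using a b by (auto simp: D in_set_conv_nth)
  let ?T = "\<lambda>i j. (pd_move D (xs ! i) - pd_move D (xs ! j))
        * (sgn (xs ! j - xs ! i) + sgn (pd_move D (xs ! j) - pd_move D (xs ! i)))"
  have T_nonpos: "?T i' j' \<le> 0" for i' j'
    by (rule sgn_pair_term_nonpos)
  have "?T i j < 0"
    using ij ab by (simp add: mult_neg_pos)
  then have "(\<Sum>j<length xs. ?T i j) < (\<Sum>j<length xs. 0)"
    by (intro sum_strict_mono_ex1) (use ij T_nonpos in auto)
  then have "(\<Sum>i<length xs. \<Sum>j<length xs. ?T i j) < (\<Sum>i<length xs. 0)"
    by (intro sum_strict_mono_ex1) (use ij sum_nonpos[OF T_nonpos] in auto)
  then show False
    using pd_energy_fire_diff[OF D] assms by simp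
qed

lemma pd_energy_funpow_le: "pd_energy ((pd_fire ^^ k) C) \<le> pd_energy C"
  by (induction k) (use pd_energy_fire_le order_trans in auto)

lemma pd_period_config_antimono_predecessor:
  assumes "pd_period_config C"
  obtains D where "pd_fire D = C" "antimono_on (set_mset D) (pd_move D)"
proof -
  obtain k where k: "k > 0" "(pd_fire ^^ k) C = C"
    using assms unfolding pd_period_config_def by blast
  define D where "D = (pd_fire ^^ (k - 1)) C"
  have fire_D: "pd_fire D = C"
    using k by (metis D_def Suc_diff_1 funpow.simps(2) o_apply)
  have "pd_energy (pd_fire D) = pd_energy D"
    using pd_energy_fire_le[of D] pd_energy_funpow_le[of "k - 1" C] fire_D
    by (simp add: D_def)
  then show ?thesis
    using that fire_D pd_energy_fire_eq_imp_antimono by blast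
qed

lemma antimono_on_consecutive_preimages:
  fixes g :: "'a::linorder \<Rightarrow> 'b::linorder"
  assumes "finite A" and anti: "antimono_on A g"
    and v: "v \<in> g ` A" and w: "w \<in> g ` A" and "v < w"
    and gap: "\<forall>u\<in>g ` A. \<not> (v < u \<and> u < w)"
  obtains M m where "M \<in> A" "m \<in> A" "M < m" "g M = w" "g m = v"
    "\<forall>x\<in>A. \<not> (M < x \<and> x < m)"
proof -
  obtain p where p: "p \<in> A" "g p = v" using v by blast
  define M where "M = Max {x \<in> A. g x = w}"
  have M: "M \<in> A" "g M = w"
    using Max_in[of "{x \<in> A. g x = w}"] w \<open>finite A\<close> by (auto simp: M_def)
  have above_M: "x \<le> M" if "x \<in> A" "g x = w" for x
    using that \<open>finite A\<close> by (auto simp: M_def)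
  have "M < p"
    using monotone_onD[OF anti p(1) M(1)] M p \<open>v < w\<close> by (metis not_le)
  define m where "m = Min {x \<in> A. M < x}"
  have fin: "finite {x \<in> A. M < x}" and p_above: "p \<in> {x \<in> A. M < x}"
    using \<open>finite A\<close> p \<open>M < p\<close> by auto
  have m: "m \<in> A" "M < m" "m \<le> p"
    using Min_in[OF fin] Min_le[OF fin p_above] p_above by (auto simp: m_def)
  have "g m < w"
    using monotone_onD[OF anti M(1) m(1)] above_M[OF m(1)] M m by force
  then have "g m \<le> v"
    using gap m(1) by force
  moreover have "v \<le> g m"
    using monotone_onD[OF anti m(1) p(1) m(3)] p by simp
  ultimately have "g m = v" by simp
  moreover have "\<forall>x\<in>A. \<not> (M < x \<and> x < m)"
    using Min_le[OF fin] by (fastforce simp: m_def)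
  ultimately show ?thesis
    using that M m by blast
qed

text \<open>Between two consecutive stack sizes \<open>M < m\<close>, the stacks of size \<open>m\<close> are counted above \<open>M\<close>
  and those of size \<open>M\<close> below \<open>m\<close>; all other stacks are on the same side of both.\<close>

lemma pd_move_consecutive:
  assumes "M < m" and gap: "\<forall>x\<in>#D. \<not> (M < x \<and> x < m)"
  shows "pd_move D M - pd_move D m = int (count D M) + int (count D m) - (m - M)"
proof -
  have empty_between: "count D x = 0" if "M < x" "x < m" for x
    using gap that by (auto simp: count_eq_zero_iff)
  have "{#u \<in># D. M < u#} = {#u \<in># D. m < u#} + {#u \<in># D. u = m#}"
    by (rule multiset_eqI) (use empty_between \<open>M < m\<close> in auto)
  moreover have "{#u \<in># D. u < m#} = {#u \<in># D. u < M#} + {#u \<in># D. u = M#}"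
    by (rule multiset_eqI) (use empty_between \<open>M < m\<close> in auto)
  ultimately show ?thesis
    by (simp add: pd_move_def filter_eq_replicate_mset)
qed

lemma count_le_count_image_mset: "count D x \<le> count (image_mset f D) (f x)"
proof (cases "x \<in># D")
  case True
  then show ?thesis
    unfolding count_image_mset by (intro member_le_sum) auto
qed (simp add: not_in_iff)

lemma antimono_predecessor_gap_bound:
  assumes anti: "antimono_on (set_mset D) (pd_move D)" and C: "C = pd_fire D"
    and "v \<in># C" "w \<in># C" "v < w" and "\<forall>u\<in>#C. \<not> (v < u \<and> u < w)"
  shows "w - v \<le> int (count C v) + int (count C w) - 1"
proof -
  have img: "set_mset C = pd_move D ` set_mset D"
    by (simp add: C pd_fire_eq_image_mset)
  have "v \<in> pd_move D ` set_mset D" "w \<in> pd_move D ` set_mset D"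
    and "\<forall>u\<in>pd_move D ` set_mset D. \<not> (v < u \<and> u < w)"
    using assms(3,4,6) unfolding img by simp_all
  then obtain M m where "M \<in># D" "m \<in># D" "M < m" and g: "pd_move D M = w" "pd_move D m = v"
    and between: "\<forall>x\<in>#D. \<not> (M < x \<and> x < m)"
    by (rule antimono_on_consecutive_preimages[OF finite_set_mset anti _ _ \<open>v < w\<close>])
  have "count D M \<le> count C w" "count D m \<le> count C v"
    using count_le_count_image_mset[of D M "pd_move D"] count_le_count_image_mset[of D m "pd_move D"]
    by (simp_all add: C pd_fire_eq_image_mset g)
  then show ?thesis
    using pd_move_consecutive[OF \<open>M < m\<close> between] g \<open>M < m\<close> by linarith
qed

lemma sorted_list_of_set_consecutive:
  fixes A :: "'a::linorder set"
  assumes "finite A" and "j + 1 < length (sorted_list_of_set A)"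
  defines "s \<equiv> sorted_list_of_set A"
  shows "s ! j \<in> A" "s ! (j + 1) \<in> A" "s ! j < s ! (j + 1)"
    and "\<forall>u\<in>A. \<not> (s ! j < u \<and> u < s ! (j + 1))"
proof -
  have j: "j + 1 < length s" and set_s: "set s = A"
    and strict: "sorted_wrt (<) s" and "sorted s"
    using assms by simp_all
  show "s ! j \<in> A" "s ! (j + 1) \<in> A"
    using j nth_mem[of j s] nth_mem[of "j + 1" s] by (simp_all add: set_s)
  show "s ! j < s ! (j + 1)"
    using strict j by (simp add: sorted_wrt_nth_less)
  show "\<forall>u\<in>A. \<not> (s ! j < u \<and> u < s ! (j + 1))"
  proof (intro ballI notI)
    fix u assume "u \<in> A" and u: "s ! j < u \<and> u < s ! (j + 1)"
    then obtain k where k: "k < length s" "s ! k = u"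
      using set_s by (metis in_set_conv_nth)
    show False
      using u k j sorted_nth_mono[OF \<open>sorted s\<close>, of k j] sorted_nth_mono[OF \<open>sorted s\<close>, of "j + 1" k]
      by (cases "k \<le> j") auto
  qed
qed

theorem mainTheorem4:
  fixes C :: "int multiset"
  assumes "pd_period_config C"
  defines "s \<equiv> sorted_list_of_set (set_mset C)"
  shows "\<forall>j. j + 1 < length s \<longrightarrow>
           s ! (j + 1) - s ! j \<le> int (count C (s ! j)) + int (count C (s ! (j + 1))) - 1"
proof (intro allI impI)
  fix j assume "j + 1 < length s"
  then have "j + 1 < length (sorted_list_of_set (set_mset C))"
    by (simp add: s_def)
  note consecutive = sorted_list_of_set_consecutive[OF finite_set_mset this, folded s_def]
  obtain D where fire_D: "pd_fire D = C" and anti: "antimono_on (set_mset D) (pd_move D)"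
    using pd_period_config_antimono_predecessor[OF assms(1)] .
  show "s ! (j + 1) - s ! j \<le> int (count C (s ! j)) + int (count C (s ! (j + 1))) - 1"
    by (rule antimono_predecessor_gap_bound[OF anti fire_D[symmetric] consecutive])
qed

end
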